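(* Suppose $n\ge 2$, all buyers are additive, and the seller uses the max tie-breaking rule. Then for any selling-order function, the sequential first-price auction has a pure optimistic conservative subgame perfect equilibrium, and in every pure optimistic conservative subgame perfect equilibrium each item $j$ is allocated to a buyer $w\in\arg\max_i v_{i,j}$ at price $\max_{i\neq w}v_{i,j}$ (the second-highest valuation).
   Context: Setting: a set $M$ of $m$ items and a set $N$ of $n$ buyers; buyer $i$ is additive with values $v_{i,j}\ge 0$, $v_i(S)=\sum_{j\in S}v_{i,j}$, and quasi-linear utility. Items are sold one at a time, each by a sealed-bid first-price auction without reserve price: each buyer submits a nonnegative bid, a highest bidder wins and pays his bid. The seller fixes a selling-order function (the next item depends on the allocation of items sold so far) and a tie-breaking rule. Max tie-breaking rule: when a set $T$ of buyers tie with the highest bid on item $j$, the item goes to a buyer in $\arg\max_{i\in T}v_{i,j}$. Full information. Game-tree nodes are identified with the allocation of the items sold so far (which buyer won which item), and strategies depend on history only through this allocation. A pure subgame perfect equilibrium (SPE) is a profile of pure strategies that is a Nash equilibrium in every subgame. Optimistic conservative bidding: at a node $h$ where item $j$ is sold and buyer $i$ holds the set $X_i(h)$, let $U_i(h)$ be buyer $i$'s utility from the items sold from $h$ onward (increase in his value minus his payments for those items) when everybody follows the profile from $h$, and let $h^{j\to i}$ be the node reached when $j$ is allocated to $i$. A bid $b$ of buyer $i$ on $j$ at $h$ is optimistic conservative if $v_i(X_i(h)\cup\{j\})-v_i(X_i(h))-b+U_i(h^{j\to i})\ge U_i(h)$, i.e. winning with this bid would not leave $i$ worse off than the equilibrium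 path. A pure optimistic conservative SPE is a pure SPE in which every bid at every node (on or off the equilibrium path) is optimistic conservative. *)

theory Defs
  imports Complex_Main
begin

text \<open>Buyers are 0..<n, items are 0..<m. A game-tree node is the partial allocation
  of the items sold so far (item to buyer).\<close>

type_synonym node = "nat \<Rightarrow> nat option"

definition vset :: "(nat \<Rightarrow> nat \<Rightarrow> real) \<Rightarrow> nat \<Rightarrow> nat set \<Rightarrow> real" where
  "vset v i S = (\<Sum>j\<in>S. v i j)"

definition held :: "node \<Rightarrow> nat \<Rightarrow> nat set" where
  "held h i = {j. h j = Some i}"

inductive reach :: "nat \<Rightarrow> nat \<Rightarrow> (node \<Rightarrow> nat) \<Rightarrow> node \<Rightarrow> bool"
  for n m and \<sigma> :: "node \<Rightarrow> nat" where
  root: "reach n m \<sigma> Map.empty"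
| step: "reach n m \<sigma> h \<Longrightarrow> dom h \<noteq> {..<m} \<Longrightarrow> i < n \<Longrightarrow> reach n m \<sigma> (h(\<sigma> h \<mapsto> i))"

definition selling_order :: "nat \<Rightarrow> nat \<Rightarrow> (node \<Rightarrow> nat) \<Rightarrow> bool" where
  "selling_order n m \<sigma> \<longleftrightarrow>
     (\<forall>h. reach n m \<sigma> h \<and> dom h \<noteq> {..<m} \<longrightarrow> \<sigma> h \<in> {..<m} - dom h)"

text \<open>Max tie-breaking rule: tb h T is the buyer receiving the item sold at h when the
  buyers in T tie with the highest bid; it must be in T and maximise the value for that item.\<close>
definition max_tiebreak :: "nat \<Rightarrow> nat \<Rightarrow> (nat \<Rightarrow> nat \<Rightarrow> real) \<Rightarrow> (node \<Rightarrow> nat)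
    \<Rightarrow> (node \<Rightarrow> nat set \<Rightarrow> nat) \<Rightarrow> bool" where
  "max_tiebreak n m v \<sigma> tb \<longleftrightarrow>
     (\<forall>h T. reach n m \<sigma> h \<and> dom h \<noteq> {..<m} \<and> T \<noteq> {} \<and> T \<subseteq> {..<n} \<longrightarrow>
        tb h T \<in> T \<and> (\<forall>k\<in>T. v k (\<sigma> h) \<le> v (tb h T) (\<sigma> h)))"

text \<open>Profiles of pure strategies: b i h is buyer i's bid at node h (on item \<sigma> h).\<close>
definition winner :: "nat \<Rightarrow> (node \<Rightarrow> nat set \<Rightarrow> nat) \<Rightarrow> (nat \<Rightarrow> node \<Rightarrow> real) \<Rightarrow> node \<Rightarrow> nat" where
  "winner n tb b h = (let B = Max ((\<lambda>i. b i h) ` {..<n}) in tb h {i. i < n \<and> b i h = B})"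

fun util :: "nat \<Rightarrow> (nat \<Rightarrow> nat \<Rightarrow> real) \<Rightarrow> (node \<Rightarrow> nat) \<Rightarrow> (node \<Rightarrow> nat set \<Rightarrow> nat)
    \<Rightarrow> (nat \<Rightarrow> node \<Rightarrow> real) \<Rightarrow> nat \<Rightarrow> nat \<Rightarrow> node \<Rightarrow> real" where
  "util n v \<sigma> tb b i 0 h = 0"
| "util n v \<sigma> tb b i (Suc k) h =
     (let j = \<sigma> h; w = winner n tb b h
      in (if w = i then vset v i (held h i \<union> {j}) - vset v i (held h i) - b i h else 0)
         + util n v \<sigma> tb b i k (h(j \<mapsto> w)))"

definition U :: "nat \<Rightarrow> nat \<Rightarrow> (nat \<Rightarrow> nat \<Rightarrow> real) \<Rightarrow> (node \<Rightarrow> nat) \<Rightarrow> (node \<Rightarrow> nat set \<Rightarrow> nat)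
    \<Rightarrow> (nat \<Rightarrow> node \<Rightarrow> real) \<Rightarrow> nat \<Rightarrow> node \<Rightarrow> real" where
  "U n m v \<sigma> tb b i h = util n v \<sigma> tb b i (card ({..<m} - dom h)) h"

definition pure_SPE :: "nat \<Rightarrow> nat \<Rightarrow> (nat \<Rightarrow> nat \<Rightarrow> real) \<Rightarrow> (node \<Rightarrow> nat) \<Rightarrow> (node \<Rightarrow> nat set \<Rightarrow> nat)
    \<Rightarrow> (nat \<Rightarrow> node \<Rightarrow> real) \<Rightarrow> bool" where
  "pure_SPE n m v \<sigma> tb b \<longleftrightarrow>
     (\<forall>i h. i < n \<and> reach n m \<sigma> h \<longrightarrow> 0 \<le> b i h) \<and>
     (\<forall>i h b'. i < n \<and> reach n m \<sigma> h \<and> (\<forall>h'. reach n m \<sigma> h' \<longrightarrow> 0 \<le> b' h') \<longrightarrow>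
        U n m v \<sigma> tb (b(i := b')) i h \<le> U n m v \<sigma> tb b i h)"

definition opt_conservative :: "nat \<Rightarrow> nat \<Rightarrow> (nat \<Rightarrow> nat \<Rightarrow> real) \<Rightarrow> (node \<Rightarrow> nat) \<Rightarrow> (node \<Rightarrow> nat set \<Rightarrow> nat)
    \<Rightarrow> (nat \<Rightarrow> node \<Rightarrow> real) \<Rightarrow> bool" where
  "opt_conservative n m v \<sigma> tb b \<longleftrightarrow>
     (\<forall>i h. i < n \<and> reach n m \<sigma> h \<and> dom h \<noteq> {..<m} \<longrightarrow>
        vset v i (held h i \<union> {\<sigma> h}) - vset v i (held h i) - b i h
          + U n m v \<sigma> tb b i (h(\<sigma> h \<mapsto> i)) \<ge> U n m v \<sigma> tb b i h)"

inductive on_path :: "nat \<Rightarrow> nat \<Rightarrow> (node \<Rightarrow> nat) \<Rightarrow> (node \<Rightarrow> nat set \<Rightarrow> nat)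
    \<Rightarrow> (nat \<Rightarrow> node \<Rightarrow> real) \<Rightarrow> node \<Rightarrow> bool"
  for n m \<sigma> tb b where
  root: "on_path n m \<sigma> tb b Map.empty"
| step: "on_path n m \<sigma> tb b h \<Longrightarrow> dom h \<noteq> {..<m} \<Longrightarrow>
           on_path n m \<sigma> tb b (h(\<sigma> h \<mapsto> winner n tb b h))"

end

theory Submission
  imports Defs
begin

text \<open>
  Call \<open>r i j = max {v k j | k \<noteq> i}\<close> the rival value of buyer \<open>i\<close> for item \<open>j\<close> and
  \<open>max 0 (v i j - r i j)\<close> his Vickrey surplus. If every buyer bids \<open>min (v i j) (r i j)\<close>,
  a highest-value buyer wins each item at the second-highest value, so by backward induction
  every continuation utility is the remaining Vickrey surplus; against these bids no strategy
  earns more, and conservativeness holds with equality.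

  Conversely, in an optimistic conservative SPE the continuation utilities are again the
  remaining Vickrey surpluses by backward induction: if this holds at the children of a node,
  the continuation does not depend on who wins the current item, which is therefore sold in a
  one-shot first-price auction. Conservativeness keeps losers' bids below their values, and
  subgame perfection forbids a loser from profitably outbidding the winner and the winner from
  profitably underbidding the second-highest bid. So the top bid is tied with a loser whose
  value equals it, and max tie-breaking gives the item to a highest-value buyer at the
  second-highest value.
\<close>

definition rival_value :: "nat \<Rightarrow> (nat \<Rightarrow> nat \<Rightarrow> real) \<Rightarrow> nat \<Rightarrow> nat \<Rightarrow> real" where
  "rival_value n v i j = Max ((\<lambda>k. v k j) ` ({..<n} - {i}))"

definition surplus :: "nat \<Rightarrow> (nat \<Rightarrow> nat \<Rightarrow> real) \<Rightarrow> nat \<Rightarrow> nat \<Rightarrow> real" where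
  "surplus n v i j = max 0 (v i j - rival_value n v i j)"

definition remaining_surplus :: "nat \<Rightarrow> nat \<Rightarrow> (nat \<Rightarrow> nat \<Rightarrow> real) \<Rightarrow> nat \<Rightarrow> node \<Rightarrow> real" where
  "remaining_surplus n m v i h = (\<Sum>j\<in>{..<m} - dom h. surplus n v i j)"

text \<open>At terminal nodes \<open>\<sigma> h\<close> is an arbitrary index at which values need not be
  nonnegative, hence the bid \<open>0\<close> there.\<close>

definition equilibrium_bid :: "nat \<Rightarrow> nat \<Rightarrow> (nat \<Rightarrow> nat \<Rightarrow> real) \<Rightarrow> (node \<Rightarrow> nat) \<Rightarrow> nat \<Rightarrow> node \<Rightarrow> real" where
  "equilibrium_bid n m v \<sigma> i h = (if \<sigma> h < m then min (v i (\<sigma> h)) (rival_value n v i (\<sigma> h)) else 0)"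

definition vickrey_outcome :: "nat \<Rightarrow> (nat \<Rightarrow> nat \<Rightarrow> real) \<Rightarrow> (node \<Rightarrow> nat) \<Rightarrow> (node \<Rightarrow> nat set \<Rightarrow> nat)
    \<Rightarrow> (nat \<Rightarrow> node \<Rightarrow> real) \<Rightarrow> node \<Rightarrow> bool" where
  "vickrey_outcome n v \<sigma> tb b h \<longleftrightarrow>
     (let j = \<sigma> h; w = winner n tb b h
      in v w j = Max ((\<lambda>i. v i j) ` {..<n}) \<and> b w h = rival_value n v w j)"

lemma rival_value_ge: "k < n \<Longrightarrow> k \<noteq> i \<Longrightarrow> v k j \<le> rival_value n v i j"
  unfolding rival_value_def by (intro Max_ge) auto

lemma rival_value_attained:
  assumes "2 \<le> n"
  obtains k where "k < n" "k \<noteq> i" "v k j = rival_value n v i j"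
proof -
  have "(if i = 0 then 1 else 0) \<in> {..<n} - {i}"
    using assms by auto
  then have "rival_value n v i j \<in> (\<lambda>k. v k j) ` ({..<n} - {i})"
    unfolding rival_value_def by (intro Max_in) auto
  then obtain k where "k \<in> {..<n} - {i}" "rival_value n v i j = v k j"
    by blast
  then show ?thesis
    by (intro that[of k]) auto
qed

lemma rival_value_le:
  assumes "2 \<le> n" "\<And>k. k < n \<Longrightarrow> k \<noteq> i \<Longrightarrow> v k j \<le> c"
  shows "rival_value n v i j \<le> c"
  using rival_value_attained[OF assms(1)] assms(2) by metis

lemma vickrey_payoff_eq_surplus:
  assumes "2 \<le> n" "w < n" "i < n" "\<And>k. k < n \<Longrightarrow> v k j \<le> v w j"
  shows "(if w = i then v i j - rival_value n v w j else 0) = surplus n v i j"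
proof (cases "w = i")
  case True
  have "rival_value n v w j \<le> v w j"
    using assms by (intro rival_value_le) auto
  then show ?thesis
    using True by (simp add: surplus_def)
next
  case False
  have "v i j \<le> rival_value n v i j"
    using assms(4)[OF assms(3)] rival_value_ge[OF assms(2) False, of v j] by linarith
  then show ?thesis
    using False by (simp add: surplus_def)
qed

lemma unsold_fun_upd: "{..<m} - dom (h(a \<mapsto> x)) = ({..<m} - dom h) - {a}"
  by auto

lemma U_terminal: "dom h = {..<m} \<Longrightarrow> U n m v \<sigma> tb b i h = 0"
  by (simp add: U_def)

lemma remaining_surplus_terminal: "dom h = {..<m} \<Longrightarrow> remaining_surplus n m v i h = 0"
  by (simp add: remaining_surplus_def)

lemma util_cong:
  assumes "\<And>x h'. dom h \<subseteq> dom h' \<Longrightarrow> b x h' = b' x h'"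
  shows "util n v \<sigma> tb b i k h = util n v \<sigma> tb b' i k h"
  using assms
proof (induction k arbitrary: h)
  case 0
  show ?case by simp
next
  case (Suc k)
  have "b x h = b' x h" for x
    using Suc.prems by simp
  then have "winner n tb b h = winner n tb b' h"
    unfolding winner_def by simp
  moreover have "util n v \<sigma> tb b i k (h(\<sigma> h \<mapsto> x)) = util n v \<sigma> tb b' i k (h(\<sigma> h \<mapsto> x))" for x
  proof (rule Suc.IH)
    fix y and h' :: node assume "dom (h(\<sigma> h \<mapsto> x)) \<subseteq> dom h'"
    then show "b y h' = b' y h'"
      by (intro Suc.prems) auto
  qed
  ultimately show ?case
    using \<open>\<And>x. b x h = b' x h\<close> by (simp add: Let_def)
qed

locale sequential_auction =
  fixes n m :: nat and v :: "nat \<Rightarrow> nat \<Rightarrow> real"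
    and \<sigma> :: "node \<Rightarrow> nat" and tb :: "node \<Rightarrow> nat set \<Rightarrow> nat"
  assumes two_buyers: "2 \<le> n"
    and selling_order: "selling_order n m \<sigma>"
    and max_tiebreak: "max_tiebreak n m v \<sigma> tb"
begin

abbreviation reachable :: "node \<Rightarrow> bool" where
  "reachable \<equiv> reach n m \<sigma>"

abbreviation payoff :: "(nat \<Rightarrow> node \<Rightarrow> real) \<Rightarrow> nat \<Rightarrow> node \<Rightarrow> real" where
  "payoff \<equiv> U n m v \<sigma> tb"

abbreviation top_bid :: "(nat \<Rightarrow> node \<Rightarrow> real) \<Rightarrow> node \<Rightarrow> real" where
  "top_bid b h \<equiv> Max ((\<lambda>i. b i h) ` {..<n})"

lemma reach_dom_subset: "reachable h \<Longrightarrow> dom h \<subseteq> {..<m}"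
proof (induction rule: reach.induct)
  case root
  show ?case by simp
next
  case (step h i)
  then have "\<sigma> h < m"
    using selling_order unfolding selling_order_def by blast
  with step.IH show ?case
    by (auto simp: dom_def split: if_split_asm)
qed

lemma
  assumes "reachable h" "dom h \<noteq> {..<m}"
  shows next_item_less: "\<sigma> h < m"
    and next_item_unsold: "\<sigma> h \<notin> dom h"
  using assms selling_order unfolding selling_order_def by auto

lemma card_unsold_child:
  assumes "reachable h" "dom h \<noteq> {..<m}"
  shows "card ({..<m} - dom h) = Suc (card ({..<m} - dom (h(\<sigma> h \<mapsto> x))))"
  unfolding unsold_fun_upd
  using next_item_less[OF assms] next_item_unsold[OF assms] by (intro card_Suc_Diff1[symmetric]) auto

lemma reachable_backward_induct [consumes 1, case_names terminal step]:
  assumes "reachable h"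
    and terminal: "\<And>h. reachable h \<Longrightarrow> dom h = {..<m} \<Longrightarrow> P h"
    and step: "\<And>h. reachable h \<Longrightarrow> dom h \<noteq> {..<m} \<Longrightarrow> (\<And>x. x < n \<Longrightarrow> P (h(\<sigma> h \<mapsto> x))) \<Longrightarrow> P h"
  shows "P h"
proof -
  have "P h'" if "reachable h'" "card ({..<m} - dom h') = k" for k h'
    using that
  proof (induction k arbitrary: h')
    case 0
    then have "dom h' = {..<m}"
      using reach_dom_subset by auto
    with 0 show ?case
      using terminal by blast
  next
    case (Suc k)
    then have unsold: "dom h' \<noteq> {..<m}"
      by auto
    show ?case
    proof (rule step[OF Suc.prems(1) unsold])
      fix x assume "x < n"
      then have "reachable (h'(\<sigma> h' \<mapsto> x))"
        by (rule reach.step[OF Suc.prems(1) unsold])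
      moreover have "card ({..<m} - dom (h'(\<sigma> h' \<mapsto> x))) = k"
        using Suc.prems(2) card_unsold_child[OF Suc.prems(1) unsold] by simp
      ultimately show "P (h'(\<sigma> h' \<mapsto> x))"
        by (rule Suc.IH)
    qed
  qed
  with assms(1) show ?thesis
    by blast
qed

lemma remaining_surplus_child:
  assumes "reachable h" "dom h \<noteq> {..<m}"
  shows "remaining_surplus n m v i (h(\<sigma> h \<mapsto> x)) = remaining_surplus n m v i h - surplus n v i (\<sigma> h)"
  unfolding remaining_surplus_def unsold_fun_upd
  using next_item_less[OF assms] next_item_unsold[OF assms] by (simp add: sum_diff1)

lemma marginal_value:
  assumes "reachable h" "dom h \<noteq> {..<m}"
  shows "vset v i (held h i \<union> {\<sigma> h}) - vset v i (held h i) = v i (\<sigma> h)"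
proof -
  have "held h i \<subseteq> {..<m}"
    using reach_dom_subset[OF assms(1)] unfolding held_def by auto
  moreover have "\<sigma> h \<notin> held h i"
    using next_item_unsold[OF assms] unfolding held_def by auto
  ultimately show ?thesis
    unfolding vset_def by (simp add: finite_subset)
qed

lemma payoff_step:
  assumes "reachable h" "dom h \<noteq> {..<m}"
  shows "payoff b i h = (if winner n tb b h = i then v i (\<sigma> h) - b i h else 0)
           + payoff b i (h(\<sigma> h \<mapsto> winner n tb b h))"
  unfolding U_def card_unsold_child[OF assms, of "winner n tb b h"]
  using marginal_value[OF assms] by (simp add: Let_def)

lemma bid_le_top_bid: "i < n \<Longrightarrow> b i h \<le> top_bid b h"
  by (intro Max_ge) auto

lemma winner_tiebreak:
  assumes "reachable h" "dom h \<noteq> {..<m}"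
  shows "winner n tb b h < n \<and> b (winner n tb b h) h = top_bid b h \<and>
         (\<forall>k<n. b k h = top_bid b h \<longrightarrow> v k (\<sigma> h) \<le> v (winner n tb b h) (\<sigma> h))"
proof -
  let ?T = "{i. i < n \<and> b i h = top_bid b h}"
  have "top_bid b h \<in> (\<lambda>i. b i h) ` {..<n}"
    using two_buyers by (intro Max_in) (auto simp: lessThan_empty_iff)
  then have "?T \<noteq> {}"
    by auto
  moreover have "?T \<subseteq> {..<n}"
    by auto
  ultimately have "tb h ?T \<in> ?T \<and> (\<forall>k\<in>?T. v k (\<sigma> h) \<le> v (tb h ?T) (\<sigma> h))"
    using max_tiebreak[unfolded max_tiebreak_def, rule_format, of h ?T] assms by blast
  moreover have "winner n tb b h = tb h ?T"
    unfolding winner_def by simp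
  ultimately show ?thesis
    by auto
qed

lemma
  assumes "reachable h" "dom h \<noteq> {..<m}"
  shows winner_less: "winner n tb b h < n"
    and winner_bid: "b (winner n tb b h) h = top_bid b h"
    and winner_value_ge: "k < n \<Longrightarrow> b k h = top_bid b h \<Longrightarrow> v k (\<sigma> h) \<le> v (winner n tb b h) (\<sigma> h)"
  using winner_tiebreak[OF assms] by auto

lemma winner_eqI:
  assumes "reachable h" "dom h \<noteq> {..<m}" "k < n"
    and "\<And>x. x < n \<Longrightarrow> x \<noteq> k \<Longrightarrow> b x h < b k h"
  shows "winner n tb b h = k"
proof (rule ccontr)
  assume "winner n tb b h \<noteq> k"
  then have "b (winner n tb b h) h < b k h"
    using assms(4) winner_less[OF assms(1,2)] by blast
  then show False
    using winner_bid[OF assms(1,2), of b] bid_le_top_bid[OF assms(3), of b h] by simp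
qed

lemma payoff_one_shot_deviation:
  fixes b :: "nat \<Rightarrow> node \<Rightarrow> real" and i :: nat and y :: real
  assumes "reachable h" "dom h \<noteq> {..<m}"
  defines "b' \<equiv> b(i := (b i)(h := y))"
  shows "payoff b' i h = (if winner n tb b' h = i then v i (\<sigma> h) - y else 0)
           + payoff b i (h(\<sigma> h \<mapsto> winner n tb b' h))"
proof -
  have "payoff b' i (h(\<sigma> h \<mapsto> x)) = payoff b i (h(\<sigma> h \<mapsto> x))" for x
    unfolding U_def
  proof (rule util_cong)
    fix k and h' :: node assume "dom (h(\<sigma> h \<mapsto> x)) \<subseteq> dom h'"
    then have "h' \<noteq> h"
      using next_item_unsold[OF assms(1,2)] by auto
    then show "b' k h' = b k h'"
      unfolding b'_def by simp
  qed
  moreover have "b' i h = y"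
    unfolding b'_def by simp
  ultimately show ?thesis
    using payoff_step[OF assms(1,2), of b' i] by simp
qed

lemma equilibrium_bid_nonneg:
  assumes "\<And>i j. i < n \<Longrightarrow> j < m \<Longrightarrow> 0 \<le> v i j" "i < n"
  shows "0 \<le> equilibrium_bid n m v \<sigma> i h"
proof (cases "\<sigma> h < m")
  case True
  obtain k where "k < n" "v k (\<sigma> h) = rival_value n v i (\<sigma> h)"
    using rival_value_attained[OF two_buyers] by metis
  with True assms show ?thesis
    unfolding equilibrium_bid_def by (metis min_def)
next
  case False
  then show ?thesis
    unfolding equilibrium_bid_def by simp
qed

lemma equilibrium_bid_vickrey_outcome:
  assumes "reachable h" "dom h \<noteq> {..<m}"
  shows "vickrey_outcome n v \<sigma> tb (equilibrium_bid n m v \<sigma>) h"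
proof -
  let ?b = "equilibrium_bid n m v \<sigma>" and ?j = "\<sigma> h"
  let ?w = "winner n tb ?b h" and ?top = "Max ((\<lambda>i. v i ?j) ` {..<n})"
  have j: "?j < m"
    by (rule next_item_less[OF assms])
  have value_le_top: "v i ?j \<le> ?top" if "i < n" for i
    using that by (intro Max_ge) auto
  have "?top \<in> (\<lambda>i. v i ?j) ` {..<n}"
    using two_buyers by (intro Max_in) (auto simp: lessThan_empty_iff)
  then obtain w0 where w0: "w0 < n" "v w0 ?j = ?top"
    by auto
  have bid_w0: "?b w0 h = rival_value n v w0 ?j"
    using j w0 value_le_top by (simp add: equilibrium_bid_def rival_value_le[OF two_buyers])
  have "?b i h \<le> ?b w0 h" if "i < n" for i
  proof (cases "i = w0")
    case False
    then have "?b i h \<le> v i ?j"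
      using j by (simp add: equilibrium_bid_def)
    also have "\<dots> \<le> rival_value n v w0 ?j"
      using rival_value_ge[OF that False] .
    finally show ?thesis
      using bid_w0 by simp
  qed simp
  then have "?b w0 h = top_bid ?b h"
    using w0(1) by (intro Max_eqI[symmetric]) auto
  then have "?top \<le> v ?w ?j"
    using winner_value_ge[OF assms w0(1)] w0(2) by simp
  then have top: "v ?w ?j = ?top"
    using value_le_top[OF winner_less[OF assms, of ?b]] by simp
  then have "?b ?w h = rival_value n v ?w ?j"
    using j value_le_top by (simp add: equilibrium_bid_def rival_value_le[OF two_buyers])
  with top show ?thesis
    unfolding vickrey_outcome_def by simp
qed

lemma payoff_eq_remaining_surplus_step:
  assumes "reachable h" "dom h \<noteq> {..<m}" "vickrey_outcome n v \<sigma> tb b h" "i < n"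
    and "payoff b i (h(\<sigma> h \<mapsto> winner n tb b h)) = remaining_surplus n m v i (h(\<sigma> h \<mapsto> winner n tb b h))"
  shows "payoff b i h = remaining_surplus n m v i h"
proof -
  let ?j = "\<sigma> h" and ?w = "winner n tb b h"
  have top: "v k ?j \<le> v ?w ?j" if "k < n" for k
    using assms(3) that unfolding vickrey_outcome_def by (simp add: Let_def)
  have "(if ?w = i then v i ?j - b i h else 0) = (if ?w = i then v i ?j - rival_value n v ?w ?j else 0)"
    using assms(3) unfolding vickrey_outcome_def Let_def by auto
  also have "\<dots> = surplus n v i ?j"
    using top by (rule vickrey_payoff_eq_surplus[OF two_buyers winner_less[OF assms(1,2)] assms(4)])
  finally show ?thesis
    using payoff_step[OF assms(1,2), of b i] assms(5) remaining_surplus_child[OF assms(1,2)] by simp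
qed

lemma payoff_equilibrium_bid:
  assumes "reachable h" "i < n"
  shows "payoff (equilibrium_bid n m v \<sigma>) i h = remaining_surplus n m v i h"
  using assms(1)
proof (induction rule: reachable_backward_induct)
  case (terminal h)
  then show ?case
    by (simp add: U_terminal remaining_surplus_terminal)
next
  case (step h)
  show ?case
    using step.IH[OF winner_less[OF step.hyps]]
    by (rule payoff_eq_remaining_surplus_step[OF step.hyps equilibrium_bid_vickrey_outcome[OF step.hyps] assms(2)])
qed

lemma immediate_payoff_le_surplus:
  assumes "reachable h" "dom h \<noteq> {..<m}" "i < n"
    and "\<And>k. k < n \<Longrightarrow> k \<noteq> i \<Longrightarrow> b k = equilibrium_bid n m v \<sigma> k"
  shows "(if winner n tb b h = i then v i (\<sigma> h) - b i h else 0) \<le> surplus n v i (\<sigma> h)"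
proof (cases "winner n tb b h = i")
  case True
  let ?j = "\<sigma> h"
  obtain k where k: "k < n" "k \<noteq> i" "v k ?j = rival_value n v i ?j"
    using rival_value_attained[OF two_buyers] by metis
  have "b k h \<le> b i h"
    using bid_le_top_bid[OF k(1)] winner_bid[OF assms(1,2), of b] True by simp
  moreover have "b k h = min (v k ?j) (rival_value n v k ?j)"
    using assms(4)[OF k(1,2)] next_item_less[OF assms(1,2)] by (simp add: equilibrium_bid_def)
  moreover have "v i ?j \<le> rival_value n v k ?j"
    using rival_value_ge[OF assms(3)] k(2) by simp
  ultimately have "min (rival_value n v i ?j) (v i ?j) \<le> b i h"
    using k(3) by linarith
  with True show ?thesis
    by (auto simp: surplus_def min_def max_def)
qed (simp add: surplus_def)

lemma payoff_le_remaining_surplus: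
  assumes "reachable h" "i < n" "\<And>k. k < n \<Longrightarrow> k \<noteq> i \<Longrightarrow> b k = equilibrium_bid n m v \<sigma> k"
  shows "payoff b i h \<le> remaining_surplus n m v i h"
  using assms(1)
proof (induction rule: reachable_backward_induct)
  case (terminal h)
  then show ?case
    by (simp add: U_terminal remaining_surplus_terminal)
next
  case (step h)
  have "payoff b i (h(\<sigma> h \<mapsto> winner n tb b h)) \<le> remaining_surplus n m v i (h(\<sigma> h \<mapsto> winner n tb b h))"
    by (rule step.IH[OF winner_less[OF step.hyps]])
  then have "payoff b i (h(\<sigma> h \<mapsto> winner n tb b h)) \<le> remaining_surplus n m v i h - surplus n v i (\<sigma> h)"
    unfolding remaining_surplus_child[OF step.hyps] .
  then show ?case
    using payoff_step[OF step.hyps, of b i] immediate_payoff_le_surplus[OF step.hyps assms(2,3)]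
    by linarith
qed

lemma equilibrium_bid_pure_SPE:
  assumes "\<And>i j. i < n \<Longrightarrow> j < m \<Longrightarrow> 0 \<le> v i j"
  shows "pure_SPE n m v \<sigma> tb (equilibrium_bid n m v \<sigma>)"
proof -
  let ?e = "equilibrium_bid n m v \<sigma>"
  have "payoff (?e(i := b')) i h \<le> payoff ?e i h" if "i < n" "reachable h" for i h b'
  proof -
    have "payoff (?e(i := b')) i h \<le> remaining_surplus n m v i h"
      by (rule payoff_le_remaining_surplus[OF that(2,1)]) simp
    then show ?thesis
      using payoff_equilibrium_bid[OF that(2,1)] by simp
  qed
  then show ?thesis
    unfolding pure_SPE_def using equilibrium_bid_nonneg[OF assms] by blast
qed

lemma equilibrium_bid_opt_conservative:
  "opt_conservative n m v \<sigma> tb (equilibrium_bid n m v \<sigma>)"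
  unfolding opt_conservative_def
proof (intro allI impI)
  fix i h
  assume "i < n \<and> reachable h \<and> dom h \<noteq> {..<m}"
  then have i: "i < n" and h: "reachable h" "dom h \<noteq> {..<m}"
    by auto
  have "v i (\<sigma> h) - equilibrium_bid n m v \<sigma> i h = surplus n v i (\<sigma> h)"
    using next_item_less[OF h] by (simp add: equilibrium_bid_def surplus_def min_def max_def)
  then show "vset v i (held h i \<union> {\<sigma> h}) - vset v i (held h i) - equilibrium_bid n m v \<sigma> i h
      + payoff (equilibrium_bid n m v \<sigma>) i (h(\<sigma> h \<mapsto> i)) \<ge> payoff (equilibrium_bid n m v \<sigma>) i h"
    using marginal_value[OF h] remaining_surplus_child[OF h]
      payoff_equilibrium_bid[OF h(1) i] payoff_equilibrium_bid[OF reach.step[OF h i] i]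
    by simp
qed

text \<open>Continuation payoffs that do not depend on who wins the item sold at \<open>h\<close> turn the
  auction at \<open>h\<close> into a one-shot first-price auction.\<close>

context
  fixes b :: "nat \<Rightarrow> node \<Rightarrow> real" and h :: node and c :: "nat \<Rightarrow> real"
  assumes SPE: "pure_SPE n m v \<sigma> tb b"
    and reachable_node: "reachable h" and unsold_node: "dom h \<noteq> {..<m}"
    and continuation: "\<And>x i. x < n \<Longrightarrow> i < n \<Longrightarrow> payoff b i (h(\<sigma> h \<mapsto> x)) = c i"
begin

lemma SPE_no_profitable_bid:
  assumes "i < n" "0 \<le> y"
  shows "(if winner n tb (b(i := (b i)(h := y))) h = i then v i (\<sigma> h) - y else 0)
           \<le> (if winner n tb b h = i then v i (\<sigma> h) - b i h else 0)"
proof -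
  let ?b' = "b(i := (b i)(h := y))"
  have "\<forall>h'. reachable h' \<longrightarrow> 0 \<le> ((b i)(h := y)) h'"
    using SPE assms unfolding pure_SPE_def by auto
  then have "payoff ?b' i h \<le> payoff b i h"
    using conjunct2[OF SPE[unfolded pure_SPE_def], rule_format, of i h "(b i)(h := y)"]
      reachable_node assms(1) by blast
  then show ?thesis
    using payoff_one_shot_deviation[OF reachable_node unsold_node, of b i y]
      payoff_step[OF reachable_node unsold_node, of b i]
      continuation[OF winner_less[OF reachable_node unsold_node] assms(1)]
    by simp
qed

lemma top_bid_nonneg: "0 \<le> top_bid b h"
proof -
  have "0 < n"
    using two_buyers by simp
  then have "0 \<le> b 0 h"
    using SPE reachable_node unfolding pure_SPE_def by blast
  with bid_le_top_bid[OF \<open>0 < n\<close>, of b h] show ?thesis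
    by linarith
qed

lemma loser_value_le_top_bid:
  assumes "k < n" "k \<noteq> winner n tb b h"
  shows "v k (\<sigma> h) \<le> top_bid b h"
proof (rule ccontr)
  assume "\<not> v k (\<sigma> h) \<le> top_bid b h"
  define y where "y = (top_bid b h + v k (\<sigma> h)) / 2"
  have y: "0 \<le> y" "top_bid b h < y" "y < v k (\<sigma> h)"
    using \<open>\<not> v k (\<sigma> h) \<le> top_bid b h\<close> top_bid_nonneg unfolding y_def by auto
  have "winner n tb (b(k := (b k)(h := y))) h = k"
  proof (rule winner_eqI[OF reachable_node unsold_node assms(1)])
    fix x assume "x < n" "x \<noteq> k"
    have "b x h < y"
      using bid_le_top_bid[OF \<open>x < n\<close>, of b h] y(2) by linarith
    with \<open>x \<noteq> k\<close> show "(b(k := (b k)(h := y))) x h < (b(k := (b k)(h := y))) k h"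
      by simp
  qed
  then show False
    using SPE_no_profitable_bid[OF assms(1) y(1)] assms(2) y(3) by simp
qed

lemma top_bid_tied:
  obtains k where "k < n" "k \<noteq> winner n tb b h" "b k h = top_bid b h"
proof -
  let ?w = "winner n tb b h"
  have w: "?w < n" "b ?w h = top_bid b h"
    using winner_less[OF reachable_node unsold_node] winner_bid[OF reachable_node unsold_node] .
  \<comment> \<open>the second-highest bid, as a rival value for the bids read as values\<close>
  let ?s = "rival_value n (\<lambda>k _. b k h) ?w 0"
  obtain k where k: "k < n" "k \<noteq> ?w" "b k h = ?s"
    using rival_value_attained[OF two_buyers, where i = ?w and v = "\<lambda>k _. b k h" and j = 0] by blast
  have "?s = top_bid b h"
  proof (rule ccontr)
    assume "?s \<noteq> top_bid b h"
    then have s: "?s < top_bid b h"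
      using bid_le_top_bid[OF k(1), of b h] k(3) by linarith
    define y where "y = (?s + top_bid b h) / 2"
    have "0 \<le> b k h"
      using SPE reachable_node k(1) unfolding pure_SPE_def by blast
    then have y: "0 \<le> y" "?s < y" "y < top_bid b h"
      using s k(3) unfolding y_def by auto
    have "winner n tb (b(?w := (b ?w)(h := y))) h = ?w"
    proof (rule winner_eqI[OF reachable_node unsold_node w(1)])
      fix x assume "x < n" "x \<noteq> ?w"
      have "b x h < y"
        using rival_value_ge[OF \<open>x < n\<close> \<open>x \<noteq> ?w\<close>, of "\<lambda>k _. b k h" 0] y(2) by simp
      with \<open>x \<noteq> ?w\<close> show "(b(?w := (b ?w)(h := y))) x h < (b(?w := (b ?w)(h := y))) ?w h"
        by simp
    qed
    then show False
      using SPE_no_profitable_bid[OF w(1) y(1)] w(2) y(3) by simp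
  qed
  with k show ?thesis
    using that by simp
qed

lemma loser_bid_le_value:
  assumes "opt_conservative n m v \<sigma> tb b" "k < n" "k \<noteq> winner n tb b h"
  shows "b k h \<le> v k (\<sigma> h)"
proof -
  have "vset v k (held h k \<union> {\<sigma> h}) - vset v k (held h k) - b k h + payoff b k (h(\<sigma> h \<mapsto> k))
          \<ge> payoff b k h"
    using assms(1)[unfolded opt_conservative_def, rule_format, of k h] assms(2) reachable_node unsold_node
    by blast
  then show ?thesis
    using marginal_value[OF reachable_node unsold_node] payoff_step[OF reachable_node unsold_node, of b k]
      continuation[OF assms(2) assms(2)] continuation[OF winner_less[OF reachable_node unsold_node] assms(2)]
      assms(3)
    by simp
qed

lemma vickrey_outcome_of_SPE:
  assumes "opt_conservative n m v \<sigma> tb b"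
  shows "vickrey_outcome n v \<sigma> tb b h"
proof -
  let ?j = "\<sigma> h" and ?w = "winner n tb b h"
  have w: "?w < n" "b ?w h = top_bid b h"
    using winner_less[OF reachable_node unsold_node] winner_bid[OF reachable_node unsold_node] .
  obtain k where k: "k < n" "k \<noteq> ?w" "b k h = top_bid b h"
    using top_bid_tied .
  have vk: "v k ?j = top_bid b h"
    using loser_bid_le_value[OF assms k(1,2)] loser_value_le_top_bid[OF k(1,2)] k(3) by simp
  have top_le_w: "top_bid b h \<le> v ?w ?j"
    using winner_value_ge[where b = b, OF reachable_node unsold_node k(1,3)] vk by simp
  have "v i ?j \<le> v ?w ?j" if "i < n" for i
  proof (cases "i = ?w")
    case False
    then show ?thesis
      using loser_value_le_top_bid[OF that False] top_le_w by linarith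
  qed simp
  then have "Max ((\<lambda>i. v i ?j) ` {..<n}) = v ?w ?j"
    using w(1) by (intro Max_eqI) auto
  moreover have "rival_value n v ?w ?j \<le> top_bid b h"
    by (rule rival_value_le[OF two_buyers]) (rule loser_value_le_top_bid)
  moreover have "top_bid b h \<le> rival_value n v ?w ?j"
    using rival_value_ge[OF k(1,2), of v ?j] vk by simp
  ultimately show ?thesis
    unfolding vickrey_outcome_def Let_def using w(2) by simp
qed

end

lemma payoff_eq_remaining_surplus_of_SPE:
  assumes "pure_SPE n m v \<sigma> tb b" "opt_conservative n m v \<sigma> tb b" "reachable h" "i < n"
  shows "payoff b i h = remaining_surplus n m v i h"
  using assms(3,4)
proof (induction arbitrary: i rule: reachable_backward_induct)
  case (terminal h)
  then show ?case
    by (simp add: U_terminal remaining_surplus_terminal)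
next
  case (step h)
  have "payoff b i (h(\<sigma> h \<mapsto> x)) = remaining_surplus n m v i h - surplus n v i (\<sigma> h)"
    if "x < n" "i < n" for x i
  proof -
    have "payoff b i (h(\<sigma> h \<mapsto> x)) = remaining_surplus n m v i (h(\<sigma> h \<mapsto> x))"
      by (rule step.IH[OF that])
    then show ?thesis
      unfolding remaining_surplus_child[OF step.hyps(1,2)] .
  qed
  then have "vickrey_outcome n v \<sigma> tb b h"
    by (rule vickrey_outcome_of_SPE[OF assms(1) step.hyps(1,2) _ assms(2)])
  then show ?case
    using step.IH[OF winner_less[OF step.hyps(1,2)] step.prems]
    by (rule payoff_eq_remaining_surplus_step[OF step.hyps(1,2) _ step.prems])
qed

lemma SPE_vickrey_outcome:
  assumes "pure_SPE n m v \<sigma> tb b" "opt_conservative n m v \<sigma> tb b"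
    and "reachable h" "dom h \<noteq> {..<m}"
  shows "vickrey_outcome n v \<sigma> tb b h"
proof (rule vickrey_outcome_of_SPE[OF assms(1,3,4) _ assms(2)])
  fix x i assume "x < n" "i < n"
  then show "payoff b i (h(\<sigma> h \<mapsto> x)) = remaining_surplus n m v i h - surplus n v i (\<sigma> h)"
    using payoff_eq_remaining_surplus_of_SPE[OF assms(1,2) reach.step[OF assms(3,4)]]
      remaining_surplus_child[OF assms(3,4)]
    by simp
qed

lemma on_path_reachable: "on_path n m \<sigma> tb b h \<Longrightarrow> reachable h"
proof (induction rule: on_path.induct)
  case root
  show ?case by (rule reach.root)
next
  case (step h)
  then show ?case
    using reach.step winner_less by blast
qed

end

theorem mainTheorem5:
  fixes n m :: nat and v :: "nat \<Rightarrow> nat \<Rightarrow> real"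
    and \<sigma> :: "node \<Rightarrow> nat" and tb :: "node \<Rightarrow> nat set \<Rightarrow> nat"
  assumes "n \<ge> 2"
    and "\<And>i j. i < n \<Longrightarrow> j < m \<Longrightarrow> 0 \<le> v i j"
    and "selling_order n m \<sigma>"
    and "max_tiebreak n m v \<sigma> tb"
  shows "(\<exists>b. pure_SPE n m v \<sigma> tb b \<and> opt_conservative n m v \<sigma> tb b) \<and>
         (\<forall>b. pure_SPE n m v \<sigma> tb b \<and> opt_conservative n m v \<sigma> tb b \<longrightarrow>
            (\<forall>h. on_path n m \<sigma> tb b h \<and> dom h \<noteq> {..<m} \<longrightarrow>
               (let j = \<sigma> h; w = winner n tb b h
                in v w j = Max ((\<lambda>i. v i j) ` {..<n}) \<and>
                   b w h = Max ((\<lambda>i. v i j) ` ({..<n} - {w})))))"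
proof -
  interpret sequential_auction n m v \<sigma> tb
    using assms(1,3,4) by unfold_locales
  have "pure_SPE n m v \<sigma> tb (equilibrium_bid n m v \<sigma>) \<and> opt_conservative n m v \<sigma> tb (equilibrium_bid n m v \<sigma>)"
    using equilibrium_bid_pure_SPE[OF assms(2)] equilibrium_bid_opt_conservative by blast
  moreover have "vickrey_outcome n v \<sigma> tb b h"
    if "pure_SPE n m v \<sigma> tb b" "opt_conservative n m v \<sigma> tb b" "on_path n m \<sigma> tb b h" "dom h \<noteq> {..<m}"
    for b h
    using SPE_vickrey_outcome[OF that(1,2) on_path_reachable[OF that(3)] that(4)] .
  ultimately show ?thesis
    unfolding vickrey_outcome_def rival_value_def by blast
qed

end
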